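(* Let $S$ be a field and $X,Y\in\mathbb{M}_2(S)$ with determinants $\delta,\delta'$ and supertraces $\tau=\operatorname{str}(X)$, $\tau'=\operatorname{str}(Y)$. Then $[X,Y]\notin\mathrm{GL}_2(S)$ if and only if $$\delta\tau'^2+\delta'\tau^2+\operatorname{tr}(XY)\,\tau'\tau=\operatorname{str}(XY)\operatorname{str}(YX).$$ Moreover, $X$ is a scalar matrix if and only if this equation holds for all $Y\in\mathbb{M}_2(S)$.
   Context: $[X,Y]=XY-YX$. For $M=(m_{ij})\in\mathbb{M}_2(S)$, the supertrace is $\operatorname{str}(M)=m_{11}-m_{22}$. *)

theory Defs
  imports "HOL-Analysis.Analysis"
begin

definition str2 :: "'a::ring_1^2^2 \<Rightarrow> 'a" where
  "str2 M = M $ 1 $ 1 - M $ 2 $ 2"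

definition commutator :: "'a::ring_1^'n^'n \<Rightarrow> 'a^'n^'n \<Rightarrow> 'a^'n^'n" where
  "commutator X Y = X ** Y - Y ** X"

end

theory Submission
  imports Defs
begin

text \<open>
  For 2x2 matrices over a commutative ring one has the polynomial identity
    det [X,Y] = str(XY) str(YX) - (det X str(Y)^2 + det Y str(X)^2 + tr(XY) str(X) str(Y)),
  so the displayed equation says exactly that det [X,Y] = 0.  Over a field this is
  the same as [X,Y] not being invertible, which gives the first claim.

  For the second claim: a scalar matrix commutes with everything, so its commutators
  vanish and the equation holds for all Y.  Conversely, if det [X,Y] = 0 for all Y,
  testing Y against the matrix units E21, E12 and the swap matrix E12 + E21 gives
  det [X,Y] = -x12^2, -x21^2 and (x11 - x22)^2 - (x12 - x21)^2 respectively; in an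
  integral domain this forces x12 = x21 = 0 and x11 = x22, i.e. X is scalar.
\<close>

lemma det_commutator_2:
  fixes X Y :: "'a::comm_ring_1^2^2"
  shows "det (commutator X Y) = str2 (X ** Y) * str2 (Y ** X)
           - (det X * (str2 Y)^2 + det Y * (str2 X)^2 + trace (X ** Y) * str2 Y * str2 X)"
  unfolding det_2 str2_def trace_def commutator_def
  by (simp add: matrix_matrix_mult_def sum_2 power2_eq_square algebra_simps)

lemma commutator_equation_iff_det_zero:
  fixes X Y :: "'a::comm_ring_1^2^2"
  shows "(det X * (str2 Y)^2 + det Y * (str2 X)^2 + trace (X ** Y) * str2 Y * str2 X
            = str2 (X ** Y) * str2 (Y ** X)) \<longleftrightarrow> det (commutator X Y) = 0"
  unfolding det_commutator_2 right_minus_eq by (rule eq_commute)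

lemma commutator_mat_left:
  fixes Y :: "'a::comm_ring_1^'n^'n"
  shows "commutator (mat c) Y = 0"
proof -
  have left: "(mat c ** Y) $ i $ j = c * Y $ i $ j" for i j
    by (simp add: matrix_matrix_mult_def mat_def mult_delta_left)
  have right: "(Y ** mat c) $ i $ j = c * Y $ i $ j" for i j
    by (simp add: matrix_matrix_mult_def mat_def mult_delta_right mult.commute)
  show ?thesis
    by (simp add: commutator_def vec_eq_iff left right)
qed

lemma det_commutator_unit21:
  fixes X :: "'a::comm_ring_1^2^2"
  shows "det (commutator X (\<chi> i j. if i = 2 \<and> j = 1 then 1 else 0)) = - ((X$1$2)^2)"
  unfolding det_2 commutator_def
  by (simp add: matrix_matrix_mult_def sum_2 power2_eq_square)

lemma det_commutator_unit12:
  fixes X :: "'a::comm_ring_1^2^2"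
  shows "det (commutator X (\<chi> i j. if i = 1 \<and> j = 2 then 1 else 0)) = - ((X$2$1)^2)"
  unfolding det_2 commutator_def
  by (simp add: matrix_matrix_mult_def sum_2 power2_eq_square)

lemma det_commutator_swap:
  fixes X :: "'a::comm_ring_1^2^2"
  shows "det (commutator X (\<chi> i j. if i \<noteq> j then 1 else 0))
           = (X$1$1 - X$2$2)^2 - (X$1$2 - X$2$1)^2"
  unfolding det_2 commutator_def
  by (simp add: matrix_matrix_mult_def sum_2 power2_eq_square algebra_simps)

lemma scalar_if_commutators_singular:
  fixes X :: "'a::idom^2^2"
  assumes singular: "\<And>Y. det (commutator X Y) = 0"
  shows "\<exists>c. X = mat c"
proof -
  have x12: "X$1$2 = 0"
    using singular det_commutator_unit21[of X] by simp
  have x21: "X$2$1 = 0"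
    using singular det_commutator_unit12[of X] by simp
  have "(X$1$1 - X$2$2)^2 = 0"
    using singular det_commutator_swap[of X] x12 x21 by simp
  then have diag: "X$1$1 = X$2$2" by simp
  have "X = mat (X$1$1)"
    using x12 x21 diag by (simp add: vec_eq_iff mat_def forall_2)
  then show ?thesis by blast
qed

theorem corollary4p11:
  fixes X :: "'a::field^2^2"
  shows "(\<forall>Y :: 'a^2^2.
            (\<not> invertible (commutator X Y)) \<longleftrightarrow>
            det X * (str2 Y)^2 + det Y * (str2 X)^2 + trace (X ** Y) * str2 Y * str2 X
              = str2 (X ** Y) * str2 (Y ** X))
       \<and> ((\<exists>c. X = mat c) \<longleftrightarrow>
            (\<forall>Y :: 'a^2^2.
              det X * (str2 Y)^2 + det Y * (str2 X)^2 + trace (X ** Y) * str2 Y * str2 X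
                = str2 (X ** Y) * str2 (Y ** X)))"
proof (intro conjI)
  show "\<forall>Y :: 'a^2^2. (\<not> invertible (commutator X Y)) \<longleftrightarrow>
          det X * (str2 Y)^2 + det Y * (str2 X)^2 + trace (X ** Y) * str2 Y * str2 X
            = str2 (X ** Y) * str2 (Y ** X)"
    by (simp add: commutator_equation_iff_det_zero invertible_det_nz)
  show "(\<exists>c. X = mat c) \<longleftrightarrow>
          (\<forall>Y :: 'a^2^2. det X * (str2 Y)^2 + det Y * (str2 X)^2 + trace (X ** Y) * str2 Y * str2 X
            = str2 (X ** Y) * str2 (Y ** X))"
    unfolding commutator_equation_iff_det_zero
  proof
    assume "\<exists>c. X = mat c"
    then obtain c where "X = mat c" by blast
    then have "commutator X Y = 0" for Y
      by (simp add: commutator_mat_left)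
    then show "\<forall>Y. det (commutator X Y) = 0"
      by (simp add: det_2)
  next
    assume "\<forall>Y. det (commutator X Y) = 0"
    then show "\<exists>c. X = mat c"
      by (intro scalar_if_commutators_singular) blast
  qed
qed

end
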